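(* Let $A=[a_{ij}]$ be a real $n\times n$ matrix with zero diagonal and $f(\sigma)=\sum_{p=1}^{n-1}\sum_{q=p+1}^n a_{\sigma(p)\sigma(q)}$ its LOP objective function on $\Sigma_n$. Let $1\le k\le n$, let $i_1,\dots,i_k\in\{1,\dots,n\}$ be distinct, let $S_k=\{\sigma:\sigma(1)=i_1,\dots,\sigma(k)=i_k\}$ and $S_{k-1}=\{\sigma:\sigma(1)=i_1,\dots,\sigma(k-1)=i_{k-1}\}$, and set $\mu_k=\frac{1}{|S_k|}\sum_{\sigma\in S_k}f(\sigma)$, $\mu_{k-1}=\frac{1}{|S_{k-1}|}\sum_{\sigma\in S_{k-1}}f(\sigma)$. Then $$\mu_k-\mu_{k-1}=\frac12\sum_{j\in\{1,\dots,n\}\setminus\{i_1,\dots,i_k\}}\bigl(a_{i_kj}-a_{ji_k}\bigr).$$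
   Context: $\Sigma_n$ is the symmetric group on $\{1,\dots,n\}$; $\sigma(p)$ is the row/column index placed in position $p$; for $k=1$, $S_0=\Sigma_n$. *)

theory Defs
  imports Complex_Main "HOL-Combinatorics.Permutations"
begin

definition lop_obj :: "nat \<Rightarrow> (nat \<Rightarrow> nat \<Rightarrow> real) \<Rightarrow> (nat \<Rightarrow> nat) \<Rightarrow> real" where
  "lop_obj n a \<sigma> = (\<Sum>p = 1..n - 1. \<Sum>q = p + 1..n. a (\<sigma> p) (\<sigma> q))"

definition fixed_prefix :: "nat \<Rightarrow> (nat \<Rightarrow> nat) \<Rightarrow> nat \<Rightarrow> (nat \<Rightarrow> nat) set" where
  "fixed_prefix n i m = {\<sigma>. \<sigma> permutes {1..n} \<and> (\<forall>p\<in>{1..m}. \<sigma> p = i p)}"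

definition mean_obj :: "nat \<Rightarrow> (nat \<Rightarrow> nat \<Rightarrow> real) \<Rightarrow> (nat \<Rightarrow> nat) set \<Rightarrow> real" where
  "mean_obj n a S = (\<Sum>\<sigma>\<in>S. lop_obj n a \<sigma>) / real (card S)"

end

theory Submission
  imports Defs
begin

text \<open>
  Write \<open>f(\<sigma>) = \<Sum>\<^sub>x\<^sub>,\<^sub>y a\<^sub>x\<^sub>y [\<sigma>\<inverse>(x) < \<sigma>\<inverse>(y)]\<close>. Averaged over \<open>S\<^sub>m\<close>, the coefficient of \<open>a\<^sub>x\<^sub>y\<close>
  is the fraction of \<open>\<sigma> \<in> S\<^sub>m\<close> placing \<open>x\<close> before \<open>y\<close>. It is 0 or 1 as soon as \<open>x\<close> or \<open>y\<close>
  is one of \<open>i\<^sub>1, \<dots>, i\<^sub>m\<close>, and it is 1/2 for two distinct unplaced elements, since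
  composing with their transposition is an involution of \<open>S\<^sub>m\<close> reversing their order.
  Passing from \<open>S\<^sub>k\<^sub>-\<^sub>1\<close> to \<open>S\<^sub>k\<close> therefore only changes the coefficients of the pairs
  \<open>(i\<^sub>k, j)\<close> and \<open>(j, i\<^sub>k)\<close> with \<open>j\<close> unplaced, from 1/2 to 1 and 0 respectively.
\<close>

lemma lop_obj_eq_sum_less:
  "lop_obj n a \<sigma> = (\<Sum>p\<in>{1..n}. \<Sum>q\<in>{1..n}. if p < q then a (\<sigma> p) (\<sigma> q) else 0)"
proof -
  have "lop_obj n a \<sigma> = (\<Sum>p\<in>{1..n}. \<Sum>q\<in>{p<..n}. a (\<sigma> p) (\<sigma> q))"
  proof (cases n)
    case (Suc m)
    then have "{1..n} = insert n {1..m}" by auto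
    then show ?thesis using Suc by (simp add: lop_obj_def atLeastSucAtMost_greaterThanAtMost)
  qed (simp add: lop_obj_def)
  also have "\<dots> = (\<Sum>p\<in>{1..n}. \<Sum>q\<in>{1..n}. if p < q then a (\<sigma> p) (\<sigma> q) else 0)"
  proof (rule sum.cong[OF refl])
    fix p assume "p \<in> {1..n}"
    then have "{p<..n} = {q \<in> {1..n}. p < q}" by auto
    then show "(\<Sum>q\<in>{p<..n}. a (\<sigma> p) (\<sigma> q)) = (\<Sum>q\<in>{1..n}. if p < q then a (\<sigma> p) (\<sigma> q) else 0)"
      by (simp only: sum.inter_filter[OF finite_atLeastAtMost])
  qed
  finally show ?thesis .
qed

lemma lop_obj_eq_sum_precedes:
  assumes "\<sigma> permutes {1..n}"
  shows "lop_obj n a \<sigma> = (\<Sum>x\<in>{1..n}. \<Sum>y\<in>{1..n}. if inv \<sigma> x < inv \<sigma> y then a x y else 0)"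
proof -
  have reindex: "(\<Sum>p\<in>{1..n}. g p) = (\<Sum>x\<in>{1..n}. g (inv \<sigma> x))" for g :: "nat \<Rightarrow> real"
    using sum.permute[OF permutes_inv[OF assms]] by simp
  have reindex2: "(\<Sum>p\<in>{1..n}. \<Sum>q\<in>{1..n}. h p q) = (\<Sum>x\<in>{1..n}. \<Sum>y\<in>{1..n}. h (inv \<sigma> x) (inv \<sigma> y))"
    for h :: "nat \<Rightarrow> nat \<Rightarrow> real"
    by (subst reindex) (rule sum.cong[OF refl reindex])
  show ?thesis
    unfolding lop_obj_eq_sum_less by (subst reindex2) (simp add: permutes_inverses(1)[OF assms] cong: if_cong)
qed

definition precedence_ratio :: "('p::linorder \<Rightarrow> 'a) set \<Rightarrow> 'a \<Rightarrow> 'a \<Rightarrow> real" where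
  "precedence_ratio S x y = real (card {\<sigma> \<in> S. inv \<sigma> x < inv \<sigma> y}) / real (card S)"

lemma mean_obj_eq_sum_precedence_ratio:
  assumes perm: "\<forall>\<sigma>\<in>S. \<sigma> permutes {1..n}"
  shows "mean_obj n a S = (\<Sum>x\<in>{1..n}. \<Sum>y\<in>{1..n}. a x y * precedence_ratio S x y)"
proof -
  have "finite S"
    using perm by (intro finite_subset[OF _ finite_permutations[of "{1..n}"]]) auto
  have "(\<Sum>\<sigma>\<in>S. lop_obj n a \<sigma>)
      = (\<Sum>\<sigma>\<in>S. \<Sum>x\<in>{1..n}. \<Sum>y\<in>{1..n}. if inv \<sigma> x < inv \<sigma> y then a x y else 0)"
    using perm by (intro sum.cong refl lop_obj_eq_sum_precedes) auto
  also have "\<dots> = (\<Sum>x\<in>{1..n}. \<Sum>y\<in>{1..n}. \<Sum>\<sigma>\<in>S. if inv \<sigma> x < inv \<sigma> y then a x y else 0)"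
    by (subst sum.swap, subst (2) sum.swap) (rule refl)
  also have "\<dots> = (\<Sum>x\<in>{1..n}. \<Sum>y\<in>{1..n}. a x y * real (card {\<sigma> \<in> S. inv \<sigma> x < inv \<sigma> y}))"
    by (simp add: sum.inter_filter[OF \<open>finite S\<close>, symmetric] mult.commute)
  finally show ?thesis
    by (simp add: mean_obj_def precedence_ratio_def sum_divide_distrib)
qed

lemma precedence_ratio_eq_of_bool:
  assumes "finite S" "S \<noteq> {}" "\<forall>\<sigma>\<in>S. (inv \<sigma> x < inv \<sigma> y) = b"
  shows "precedence_ratio S x y = of_bool b"
proof -
  have "{\<sigma> \<in> S. inv \<sigma> x < inv \<sigma> y} = (if b then S else {})"
    using assms(3) by auto
  then show ?thesis
    using assms(1,2) by (simp add: precedence_ratio_def)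
qed

lemma precedence_ratio_eq_half:
  assumes "finite S" "S \<noteq> {}" "x \<noteq> y" and bij: "\<forall>\<sigma>\<in>S. bij \<sigma>"
    and closed: "\<forall>\<sigma>\<in>S. Transposition.transpose x y \<circ> \<sigma> \<in> S"
  shows "precedence_ratio S x y = 1/2"
proof -
  define \<tau> where "\<tau> = Transposition.transpose x y"
  define A where "A = {\<sigma> \<in> S. inv \<sigma> x < inv \<sigma> y}"
  define B where "B = {\<sigma> \<in> S. inv \<sigma> y < inv \<sigma> x}"
  have inv_swap: "inv (\<tau> \<circ> \<sigma>) x = inv \<sigma> y" "inv (\<tau> \<circ> \<sigma>) y = inv \<sigma> x" if "\<sigma> \<in> S" for \<sigma>
    using that bij by (simp_all add: \<tau>_def o_inv_distrib)
  have "bij_betw ((\<circ>) \<tau>) A B"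
    by (rule bij_betw_byWitness[where f' = "(\<circ>) \<tau>"])
       (use bij closed inv_swap in \<open>auto simp: A_def B_def \<tau>_def comp_assoc[symmetric]\<close>)
  then have "card A = card B"
    by (rule bij_betw_same_card)
  have "inv \<sigma> x \<noteq> inv \<sigma> y" if "\<sigma> \<in> S" for \<sigma>
    using bij that \<open>x \<noteq> y\<close> by (metis bij_inv_eq_iff)
  then have "A \<union> B = S" "A \<inter> B = {}"
    by (auto simp: A_def B_def neq_iff)
  then have "card A + card B = card S"
    using \<open>finite S\<close> by (metis card_Un_disjoint finite_Un)
  with \<open>card A = card B\<close> have "2 * card A = card S"
    by simp
  then show ?thesis
    using assms(1,2) by (simp add: precedence_ratio_def A_def[symmetric])
qed

definition unplaced :: "nat \<Rightarrow> (nat \<Rightarrow> nat) \<Rightarrow> nat \<Rightarrow> nat set" where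
  "unplaced n i m = {1..n} - i ` {1..m}"

lemma finite_fixed_prefix: "finite (fixed_prefix n i m)"
  by (rule finite_subset[OF _ finite_permutations[of "{1..n}"]]) (auto simp: fixed_prefix_def)

lemma fixed_prefix_nonempty:
  assumes "m \<le> n" "inj_on i {1..m}" "i ` {1..m} \<subseteq> {1..n}"
  shows "fixed_prefix n i m \<noteq> {}"
  using assms
proof (induction m)
  case 0
  have "id \<in> fixed_prefix n i 0"
    by (simp add: fixed_prefix_def permutes_id)
  then show ?case by blast
next
  case (Suc m)
  have "inj_on i {1..m}" "i ` {1..m} \<subseteq> {1..n}"
    using Suc.prems(2,3) by (auto intro: inj_on_subset)
  with Suc obtain \<sigma> where "\<sigma> \<in> fixed_prefix n i m"
    by auto
  then have perm: "\<sigma> permutes {1..n}" and prefix: "\<forall>p\<in>{1..m}. \<sigma> p = i p"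
    by (auto simp: fixed_prefix_def)
  define \<sigma>' where "\<sigma>' = Transposition.transpose (\<sigma> (Suc m)) (i (Suc m)) \<circ> \<sigma>"
  have "\<sigma>' permutes {1..n}"
  proof -
    have "i (Suc m) \<in> {1..n}" "\<sigma> (Suc m) \<in> {1..n}"
      using Suc.prems(1,3) permutes_in_image[OF perm] by (auto simp: image_subset_iff)
    then show ?thesis
      unfolding \<sigma>'_def by (intro permutes_compose[OF perm] permutes_swap_id)
  qed
  moreover have "\<sigma>' p = i p" if "p \<in> {1..Suc m}" for p
  proof (cases "p = Suc m")
    case False
    with that have "p \<in> {1..m}" by auto
    moreover have "\<sigma> p \<noteq> \<sigma> (Suc m)"
      using permutes_inj[OF perm] \<open>p \<in> {1..m}\<close> by (auto simp: inj_eq)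
    moreover have "i p \<noteq> i (Suc m)"
      using Suc.prems(2) \<open>p \<in> {1..m}\<close> by (auto dest: inj_onD)
    ultimately show ?thesis
      using prefix by (simp add: \<sigma>'_def)
  qed (simp add: \<sigma>'_def)
  ultimately have "\<sigma>' \<in> fixed_prefix n i (Suc m)"
    by (simp add: fixed_prefix_def)
  then show ?case by blast
qed

lemma inv_fixed_prefix:
  assumes "\<sigma> \<in> fixed_prefix n i m" "p \<in> {1..m}"
  shows "inv \<sigma> (i p) = p"
proof -
  have "\<sigma> permutes {1..n}" "\<sigma> p = i p"
    using assms by (auto simp: fixed_prefix_def)
  then show ?thesis
    by (metis permutes_inverses(2))
qed

lemma less_inv_fixed_prefix:
  assumes "\<sigma> \<in> fixed_prefix n i m" "z \<in> unplaced n i m"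
  shows "m < inv \<sigma> z"
proof (rule ccontr)
  have perm: "\<sigma> permutes {1..n}" and prefix: "\<forall>p\<in>{1..m}. \<sigma> p = i p"
    using assms(1) by (auto simp: fixed_prefix_def)
  assume "\<not> m < inv \<sigma> z"
  moreover have "inv \<sigma> z \<in> {1..n}"
    using assms(2) permutes_in_image[OF permutes_inv[OF perm]] by (auto simp: unplaced_def)
  ultimately have "inv \<sigma> z \<in> {1..m}" by auto
  then have "z \<in> i ` {1..m}"
    using prefix permutes_inverses(1)[OF perm] by (metis image_eqI)
  then show False using assms(2) by (simp add: unplaced_def)
qed

lemma transpose_comp_fixed_prefix:
  assumes "\<sigma> \<in> fixed_prefix n i m" "x \<in> unplaced n i m" "y \<in> unplaced n i m"
  shows "Transposition.transpose x y \<circ> \<sigma> \<in> fixed_prefix n i m"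
proof -
  have perm: "\<sigma> permutes {1..n}" and prefix: "\<forall>p\<in>{1..m}. \<sigma> p = i p"
    using assms(1) by (auto simp: fixed_prefix_def)
  have "Transposition.transpose x y \<circ> \<sigma> permutes {1..n}"
    using assms(2,3) by (intro permutes_compose[OF perm] permutes_swap_id) (auto simp: unplaced_def)
  moreover have "Transposition.transpose x y (\<sigma> p) = i p" if "p \<in> {1..m}" for p
  proof -
    have "i p \<noteq> x" "i p \<noteq> y"
      using assms(2,3) that by (auto simp: unplaced_def)
    then show ?thesis
      using prefix that by simp
  qed
  ultimately show ?thesis
    by (simp add: fixed_prefix_def)
qed

lemma precedence_ratio_self: "precedence_ratio S x x = 0"
  by (simp add: precedence_ratio_def)

lemma precedence_ratio_fixed_prefix_fixed:
  assumes "fixed_prefix n i m \<noteq> {}" "p \<in> {1..m}" "q \<in> {1..m}"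
  shows "precedence_ratio (fixed_prefix n i m) (i p) (i q) = of_bool (p < q)"
  using assms
  by (intro precedence_ratio_eq_of_bool finite_fixed_prefix) (auto simp: inv_fixed_prefix)

lemma precedence_ratio_fixed_prefix_fixed_free:
  assumes "fixed_prefix n i m \<noteq> {}" "p \<in> {1..m}" "y \<in> unplaced n i m"
  shows "precedence_ratio (fixed_prefix n i m) (i p) y = 1"
proof -
  have "p < inv \<sigma> y" if "\<sigma> \<in> fixed_prefix n i m" for \<sigma>
    using less_inv_fixed_prefix[OF that assms(3)] assms(2) by simp
  then show ?thesis
    using assms
    by (subst precedence_ratio_eq_of_bool[where b = True]) (auto simp: finite_fixed_prefix inv_fixed_prefix)
qed

lemma precedence_ratio_fixed_prefix_free_fixed:
  assumes "fixed_prefix n i m \<noteq> {}" "x \<in> unplaced n i m" "q \<in> {1..m}"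
  shows "precedence_ratio (fixed_prefix n i m) x (i q) = 0"
proof -
  have "\<not> inv \<sigma> x < q" if "\<sigma> \<in> fixed_prefix n i m" for \<sigma>
    using less_inv_fixed_prefix[OF that assms(2)] assms(3) by simp
  then show ?thesis
    using assms
    by (subst precedence_ratio_eq_of_bool[where b = False]) (auto simp: finite_fixed_prefix inv_fixed_prefix)
qed

lemma precedence_ratio_fixed_prefix_free:
  assumes "fixed_prefix n i m \<noteq> {}" "x \<in> unplaced n i m" "y \<in> unplaced n i m" "x \<noteq> y"
  shows "precedence_ratio (fixed_prefix n i m) x y = 1/2"
proof -
  have "\<forall>\<sigma>\<in>fixed_prefix n i m. bij \<sigma>"
    by (auto simp: fixed_prefix_def permutes_bij)
  moreover have "\<forall>\<sigma>\<in>fixed_prefix n i m. Transposition.transpose x y \<circ> \<sigma> \<in> fixed_prefix n i m"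
    using assms(2,3) transpose_comp_fixed_prefix by blast
  ultimately show ?thesis
    using assms(1,4) by (intro precedence_ratio_eq_half finite_fixed_prefix)
qed

lemma placed_not_unplaced: "p \<in> {1..m} \<Longrightarrow> i p \<notin> unplaced n i m"
  by (simp add: unplaced_def)

lemma unplaced_Suc_cases:
  assumes "z \<in> {1..n}"
  obtains (earlier) p where "p \<in> {1..m}" "z = i p"
    | (last) "z = i (Suc m)"
    | (later) "z \<in> unplaced n i (Suc m)" "z \<in> unplaced n i m" "z \<noteq> i (Suc m)"
proof (cases "z \<in> i ` {1..Suc m}")
  case True
  then obtain p where "p \<in> {1..Suc m}" "z = i p"
    by blast
  then show ?thesis
    using earlier last by (cases "p = Suc m") (auto simp: le_Suc_eq)
next
  case False
  then show ?thesis
    using assms by (intro later) (auto simp: unplaced_def)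
qed

lemma precedence_ratio_fixed_prefix_Suc_diff:
  assumes "Suc m \<le> n" "inj_on i {1..Suc m}" "i ` {1..Suc m} \<subseteq> {1..n}"
    and x: "x \<in> {1..n}" and y: "y \<in> {1..n}"
  shows "precedence_ratio (fixed_prefix n i (Suc m)) x y - precedence_ratio (fixed_prefix n i m) x y
       = (of_bool (x = i (Suc m) \<and> y \<in> unplaced n i (Suc m))
          - of_bool (y = i (Suc m) \<and> x \<in> unplaced n i (Suc m))) / 2"
proof -
  have "inj_on i {1..m}" "i ` {1..m} \<subseteq> {1..n}"
    using assms(2,3) by (auto intro: inj_on_subset)
  then have ne: "fixed_prefix n i m \<noteq> {}" "fixed_prefix n i (Suc m) \<noteq> {}"
    using assms(1-3) by (simp_all add: fixed_prefix_nonempty)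
  have last_unplaced: "i (Suc m) \<in> unplaced n i m"
    using assms(3) inj_on_image_mem_iff[OF assms(2), of "Suc m" "{1..m}"]
    by (auto simp: unplaced_def image_subset_iff)
  have placed_ne_last: "i p \<noteq> i (Suc m)" if "p \<in> {1..m}" for p
    using that last_unplaced placed_not_unplaced by metis
  show ?thesis
    by (rule unplaced_Suc_cases[where i = i and m = m, OF x];
        rule unplaced_Suc_cases[where i = i and m = m, OF y]; cases "x = y")
       (simp_all add: precedence_ratio_self ne last_unplaced placed_ne_last
          placed_not_unplaced precedence_ratio_fixed_prefix_fixed
          precedence_ratio_fixed_prefix_fixed_free precedence_ratio_fixed_prefix_free_fixed
          precedence_ratio_fixed_prefix_free)
qed

lemma double_sum_row_minus_column:
  fixes a :: "'a \<Rightarrow> 'a \<Rightarrow> 'b::comm_ring_1"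
  assumes "finite U" "c \<in> U" "R \<subseteq> U"
  shows "(\<Sum>x\<in>U. \<Sum>y\<in>U. a x y * (of_bool (x = c \<and> y \<in> R) - of_bool (y = c \<and> x \<in> R)))
       = (\<Sum>j\<in>R. a c j - a j c)"
proof -
  have row: "(\<Sum>x\<in>U. \<Sum>y\<in>U. a x y * of_bool (x = c \<and> y \<in> R)) = (\<Sum>j\<in>R. a c j)"
  proof -
    have "(\<Sum>y\<in>U. a x y * of_bool (x = c \<and> y \<in> R)) = (if x = c then \<Sum>j\<in>R. a c j else 0)" for x
      using assms(1,3) by (simp add: Int_absorb1)
    then show ?thesis
      using assms(1,2) by simp
  qed
  have column: "(\<Sum>x\<in>U. \<Sum>y\<in>U. a x y * of_bool (y = c \<and> x \<in> R)) = (\<Sum>j\<in>R. a j c)"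
  proof -
    have "(\<Sum>y\<in>U. a x y * of_bool (y = c \<and> x \<in> R)) = a x c * of_bool (x \<in> R)" for x
      using assms(1,2) by (cases "x \<in> R") simp_all
    then show ?thesis
      using assms(1,3) by (simp add: Int_absorb1)
  qed
  show ?thesis
    using row column by (simp add: right_diff_distrib sum_subtractf)
qed

theorem proposition6:
  fixes n k :: nat and a :: "nat \<Rightarrow> nat \<Rightarrow> real" and i :: "nat \<Rightarrow> nat"
  assumes diag: "\<forall>j\<in>{1..n}. a j j = 0"
    and k: "1 \<le> k" "k \<le> n"
    and inj: "inj_on i {1..k}"
    and rng: "i ` {1..k} \<subseteq> {1..n}"
  shows "mean_obj n a (fixed_prefix n i k) - mean_obj n a (fixed_prefix n i (k - 1))
         = (1/2) * (\<Sum>j\<in>{1..n} - i ` {1..k}. a (i k) j - a j (i k))"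
proof -
  obtain m where m: "k = Suc m"
    using k(1) by (cases k) auto
  have perm: "\<forall>\<sigma>\<in>fixed_prefix n i l. \<sigma> permutes {1..n}" for l
    by (simp add: fixed_prefix_def)
  have "i k \<in> {1..n}" "unplaced n i k \<subseteq> {1..n}"
    using rng k by (auto simp: unplaced_def image_subset_iff)
  have "mean_obj n a (fixed_prefix n i k) - mean_obj n a (fixed_prefix n i (k - 1))
      = (\<Sum>x\<in>{1..n}. \<Sum>y\<in>{1..n}. a x y * (precedence_ratio (fixed_prefix n i (Suc m)) x y
                                          - precedence_ratio (fixed_prefix n i m) x y))"
    by (simp add: m mean_obj_eq_sum_precedence_ratio[OF perm] sum_subtractf[symmetric] right_diff_distrib)
  also have "\<dots> = (\<Sum>x\<in>{1..n}. \<Sum>y\<in>{1..n}. a x y * (of_bool (x = i k \<and> y \<in> unplaced n i k)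
                                        - of_bool (y = i k \<and> x \<in> unplaced n i k))) / 2"
    using k inj rng unfolding m sum_divide_distrib
    by (intro sum.cong refl) (simp add: precedence_ratio_fixed_prefix_Suc_diff)
  also have "\<dots> = (\<Sum>j\<in>unplaced n i k. a (i k) j - a j (i k)) / 2"
    using \<open>i k \<in> {1..n}\<close> \<open>unplaced n i k \<subseteq> {1..n}\<close> by (simp add: double_sum_row_minus_column)
  finally show ?thesis
    by (simp add: unplaced_def)
qed

end
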